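(* Let $L>0$ be fixed and let the constant renormalized force $F=F(N)>0$ satisfy $F(N)=o(N)$ as $N\to\infty$. Then the fixed point satisfies $$\max_{1\le k\le N}\Big|(x_{k-1}-x_k)-\frac LN\Big|=o\Big(\frac1N\Big)\quad (N\to\infty),$$ so in particular the particle density exists and is the constant $1/L$ on $[-L,0]$.
   Context: A configuration consists of $N+1$ point particles $-L\le x_N<\dots<x_1<x_0\le 0$ on $[-L,0]$ with potential energy $U=\sum_{i=1}^{N}\frac{\alpha_{int}}{x_{i-1}-x_i}-\sum_{i=0}^{N}\int_{-L}^{x_i}\alpha_{ext}F_0\,dx$, $\alpha_{int},\alpha_{ext}>0$, with constant $F_0>0$; the renormalized force is the constant $F=\frac{\alpha_{ext}}{\alpha_{int}}F_0$, which may depend on $N$ (the external force pushes particles towards $0$). Write $\delta_k=x_{k-1}-x_k$, $f_k=\delta_k^{-2}$. The walls at $0,-L$ are completely inelastic. A fixed point is a configuration with $x_0=0$, $f_{k+1}+F=f_k$ for $k=1,\dots,N-1$, and either $x_N=-L$ with $f_N\ge F$, or $x_N>-L$ with $f_N=F$; it exists and is unique. The density $\rho$ of the fixed points (as $N\to\infty$) is a function on $[-L,0]$ such that for every subinterval $I\subset[-L,0]$, $\int_I\rho(x)\,dx=\lim_{N\to\infty}\frac{\#\{i:x_i\in I\}}{N}$. *)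

theory Defs
  imports "HOL-Analysis.Analysis"
begin

definition configuration :: "real \<Rightarrow> nat \<Rightarrow> (nat \<Rightarrow> real) \<Rightarrow> bool" where
  "configuration L N x \<longleftrightarrow> -L \<le> x N \<and> x 0 \<le> 0 \<and> (\<forall>k\<in>{1..N}. x k < x (k - 1))"

definition fk :: "(nat \<Rightarrow> real) \<Rightarrow> nat \<Rightarrow> real" where
  "fk x k = 1 / (x (k - 1) - x k)\<^sup>2"

definition fixed_point :: "real \<Rightarrow> real \<Rightarrow> nat \<Rightarrow> (nat \<Rightarrow> real) \<Rightarrow> bool" where
  "fixed_point L F N x \<longleftrightarrow> configuration L N x \<and> x 0 = 0 \<and>
     (\<forall>k\<in>{1..N - 1}. fk x (k + 1) + F = fk x k) \<and>
     ((x N = -L \<and> fk x N \<ge> F) \<or> (x N > -L \<and> fk x N = F))"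

end

theory Submission
  imports Defs
begin

text \<open>The fixed-point equations say that \<open>f\<^sub>k = 1/\<delta>\<^sub>k\<^sup>2\<close> drops by \<open>F\<close> from one gap to the
  next, so the gaps increase from \<open>\<delta>\<^sub>1\<close> to \<open>\<delta>\<^sub>N\<close> and \<open>1/\<delta>\<^sub>1\<^sup>2 - 1/\<delta>\<^sub>N\<^sup>2 = (N - 1) F\<close>.
  The gaps add up to at most \<open>L\<close>, so \<open>\<delta>\<^sub>1 \<le> L/N\<close>; once \<open>F \<le> N/(2L\<^sup>2)\<close> this gives
  \<open>f\<^sub>N \<ge> N\<^sup>2/(2L\<^sup>2)\<close>, which rules out \<open>f\<^sub>N = F\<close>. Hence the last particle sits on the wall,
  \<open>L/N \<le> \<delta>\<^sub>N \<le> 2L/N\<close>, and the identity yields \<open>\<delta>\<^sub>N - \<delta>\<^sub>1 \<le> (N - 1) F \<delta>\<^sub>N \<delta>\<^sub>1\<^sup>2 = O(F/N\<^sup>2)\<close>.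
  Summing gaps, \<open>x\<^sub>i\<close> stays within \<open>O(F/N) = o(1)\<close> of the lattice point \<open>-iL/N\<close>, and
  counting lattice points in \<open>[a, b]\<close> gives the density \<open>1/L\<close>.\<close>

definition gap :: "(nat \<Rightarrow> real) \<Rightarrow> nat \<Rightarrow> real" where
  "gap x k = x (k - 1) - x k"

lemma fk_eq_inverse_gap_square: "fk x k = 1 / (gap x k)\<^sup>2"
  by (simp add: fk_def gap_def)

lemma sum_gap: "(\<Sum>k = 1..i. gap x k) = x 0 - x i"
  by (induction i) (simp_all add: gap_def)

lemma fixed_point_gap_pos:
  assumes "fixed_point L F N x" and "k \<in> {1..N}"
  shows "gap x k > 0"
  using assms by (auto simp: fixed_point_def configuration_def gap_def)

lemma fixed_point_fk_eq:
  assumes fp: "fixed_point L F N x" and k: "k \<in> {1..N}"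
  shows "fk x k = fk x N + real (N - k) * F"
proof -
  have "k \<le> N" using k by simp
  then show ?thesis
  proof (induction k rule: inc_induct)
    case (step n)
    with k have "n \<in> {1..N - 1}" by auto
    with fp have "fk x (Suc n) + F = fk x n"
      unfolding fixed_point_def by auto
    with step.IH step.hyps show ?case by (simp add: of_nat_diff algebra_simps)
  qed simp
qed

lemma inverse_square_le_imp_ge:
  fixes p q :: real
  assumes "p > 0" "q > 0" "1 / p\<^sup>2 \<le> 1 / q\<^sup>2"
  shows "q \<le> p"
  using assms by (simp add: divide_simps power2_le_iff_abs_le)

lemma fixed_point_gap_mono:
  assumes fp: "fixed_point L F N x" and F: "F \<ge> 0" and k: "k \<in> {1..N}"
  shows "gap x 1 \<le> gap x k" and "gap x k \<le> gap x N"
proof -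
  have one: "1 \<in> {1..N}" and last: "N \<in> {1..N}" using k by auto
  have "fk x k \<le> fk x 1"
    using fixed_point_fk_eq[OF fp k] fixed_point_fk_eq[OF fp one] k F
    by (auto intro!: mult_right_mono)
  then show "gap x 1 \<le> gap x k"
    using inverse_square_le_imp_ge fixed_point_gap_pos[OF fp] k one
    by (simp add: fk_eq_inverse_gap_square)
  have "fk x N \<le> fk x k" using fixed_point_fk_eq[OF fp k] F by simp
  then show "gap x k \<le> gap x N"
    using inverse_square_le_imp_ge fixed_point_gap_pos[OF fp] k last
    by (simp add: fk_eq_inverse_gap_square)
qed

lemma fixed_point_sum_gap: "fixed_point L F N x \<Longrightarrow> (\<Sum>k = 1..N. gap x k) = - x N"
  using sum_gap[of x N] by (simp add: fixed_point_def)

lemma fixed_point_min_gap_le: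
  assumes fp: "fixed_point L F N x" and F: "F \<ge> 0" and N: "N \<ge> 1"
  shows "gap x 1 \<le> L / real N"
proof -
  have "real N * gap x 1 \<le> (\<Sum>k = 1..N. gap x k)"
    using sum_bounded_below[of "{1..N}" "gap x 1" "gap x"] fixed_point_gap_mono(1)[OF fp F] by simp
  also have "\<dots> \<le> L"
    using fixed_point_sum_gap[OF fp] fp by (simp add: fixed_point_def configuration_def)
  finally show ?thesis using N by (simp add: field_simps)
qed

lemma fixed_point_fk_first_ge:
  assumes L: "L > 0" and fp: "fixed_point L F N x" and F: "F \<ge> 0" and N: "N \<ge> 1"
  shows "(real N)\<^sup>2 / L\<^sup>2 \<le> fk x 1"
proof -
  have "0 < gap x 1" using fixed_point_gap_pos[OF fp] N by simp
  then have "(real N / L)\<^sup>2 \<le> (1 / gap x 1)\<^sup>2"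
    using fixed_point_min_gap_le[OF fp F N] L N by (intro power_mono) (auto simp: field_simps)
  then show ?thesis by (simp add: fk_eq_inverse_gap_square power_divide)
qed

lemma fixed_point_fk_last_ge:
  assumes L: "L > 0" and fp: "fixed_point L F N x" and F: "F \<ge> 0" and N: "N \<ge> 1"
    and small: "F \<le> real N / (2 * L\<^sup>2)"
  shows "(real N)\<^sup>2 / (2 * L\<^sup>2) \<le> fk x N"
proof -
  have "real (N - 1) * F \<le> real N * (real N / (2 * L\<^sup>2))"
    using F small by (intro mult_mono) auto
  then show ?thesis
    using fixed_point_fk_first_ge[OF L fp F N] fixed_point_fk_eq[OF fp, of 1] N
    by (simp add: power2_eq_square field_simps)
qed

lemma fixed_point_at_wall:
  assumes L: "L > 0" and fp: "fixed_point L F N x" and F: "F > 0" and N: "N \<ge> 1"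
    and small: "F \<le> real N / (2 * L\<^sup>2)"
  shows "x N = - L"
proof (rule ccontr)
  assume "x N \<noteq> - L"
  then have "fk x N = F" using fp by (auto simp: fixed_point_def)
  then have "fk x 1 = real N * F"
    using fixed_point_fk_eq[OF fp, of 1] N by (simp add: of_nat_diff algebra_simps)
  also have "\<dots> \<le> real N * (real N / (2 * L\<^sup>2))"
    using small by (intro mult_left_mono) auto
  also have "\<dots> = (real N)\<^sup>2 / (2 * L\<^sup>2)" by (simp add: power2_eq_square)
  also have "\<dots> < (real N)\<^sup>2 / L\<^sup>2" using L N by (intro divide_strict_left_mono) auto
  finally show False using fixed_point_fk_first_ge[OF L fp _ N] F by simp
qed

lemma fixed_point_max_gap_bounds:
  assumes L: "L > 0" and fp: "fixed_point L F N x" and F: "F > 0" and N: "N \<ge> 1"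
    and small: "F \<le> real N / (2 * L\<^sup>2)"
  shows "L / real N \<le> gap x N" and "gap x N \<le> 2 * L / real N"
proof -
  have "L \<le> real N * gap x N"
    using sum_bounded_above[of "{1..N}" "gap x" "gap x N"] fixed_point_gap_mono(2)[OF fp]
      fixed_point_sum_gap[OF fp] fixed_point_at_wall[OF assms] F by simp
  then show "L / real N \<le> gap x N" using N by (simp add: field_simps)
  have "1 / (2 * L / real N)\<^sup>2 = (real N)\<^sup>2 / (4 * L\<^sup>2)"
    by (simp add: power_divide power_mult_distrib)
  also have "\<dots> \<le> (real N)\<^sup>2 / (2 * L\<^sup>2)" using L by (intro divide_left_mono) auto
  also have "\<dots> \<le> 1 / (gap x N)\<^sup>2"
    using fixed_point_fk_last_ge[OF L fp _ N small] F by (simp add: fk_eq_inverse_gap_square)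
  finally show "gap x N \<le> 2 * L / real N"
    using inverse_square_le_imp_ge fixed_point_gap_pos[OF fp, of N] L N by simp
qed

lemma diff_le_inverse_square_diff:
  fixes u v :: real
  assumes "0 < v" "v \<le> u"
  shows "u - v \<le> (1 / v\<^sup>2 - 1 / u\<^sup>2) * u * v\<^sup>2"
proof -
  have "(1 / v\<^sup>2 - 1 / u\<^sup>2) * u * v\<^sup>2 = (u - v) * ((u + v) / u)"
    using assms by (simp add: field_simps power2_eq_square)
  also have "\<dots> \<ge> u - v" using assms by (simp add: field_simps)
  finally show ?thesis .
qed

lemma fixed_point_gap_deviation:
  assumes L: "L > 0" and fp: "fixed_point L F N x" and F: "F > 0" and N: "N \<ge> 1"
    and small: "F \<le> real N / (2 * L\<^sup>2)" and k: "k \<in> {1..N}"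
  shows "\<bar>gap x k - L / real N\<bar> \<le> 2 * L ^ 3 * F / (real N)\<^sup>2"
proof -
  define u v where "u = gap x N" and "v = gap x 1"
  have v: "0 < v" "v \<le> L / real N"
    using fixed_point_gap_pos[OF fp] fixed_point_min_gap_le[OF fp _ N] F N by (auto simp: v_def)
  have u: "L / real N \<le> u" "u \<le> 2 * L / real N"
    using fixed_point_max_gap_bounds[OF assms(1-5)] by (auto simp: u_def)
  have "1 / v\<^sup>2 - 1 / u\<^sup>2 = real (N - 1) * F"
    using fixed_point_fk_eq[OF fp, of 1] N by (simp add: u_def v_def fk_eq_inverse_gap_square)
  then have "u - v \<le> real (N - 1) * F * u * v\<^sup>2"
    using diff_le_inverse_square_diff[of v u] v u by simp
  also have "\<dots> \<le> (real N * F) * (2 * L / real N) * (L / real N)\<^sup>2"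
    using F v u L by (intro mult_mono power_mono) auto
  also have "\<dots> = 2 * L ^ 3 * F / (real N)\<^sup>2"
    using N by (simp add: field_simps power2_eq_square power3_eq_cube)
  finally show ?thesis
    using fixed_point_gap_mono[OF fp _ k] F u v by (simp add: u_def v_def abs_le_iff)
qed

lemma position_deviation_le:
  assumes y0: "y 0 = 0" and gaps: "\<And>k. k \<in> {1..N} \<Longrightarrow> \<bar>gap y k - h\<bar> \<le> \<delta>"
    and i: "i \<le> N"
  shows "\<bar>y i + real i * h\<bar> \<le> real i * \<delta>"
  using i
proof (induction i)
  case (Suc i)
  have "y (Suc i) + real (Suc i) * h = (y i + real i * h) - (gap y (Suc i) - h)"
    by (simp add: gap_def algebra_simps)
  then show ?case
    using Suc.IH gaps[of "Suc i"] Suc.prems by (simp add: algebra_simps)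
qed (simp add: y0)

lemma card_lattice_points_le:
  fixes h c d :: real
  assumes h: "h > 0" and cd: "c \<le> d"
  shows "real (card {i. i \<le> N \<and> c \<le> real i * h \<and> real i * h \<le> d}) \<le> (d - c) / h + 1"
proof (cases "{i. i \<le> N \<and> c \<le> real i * h \<and> real i * h \<le> d} = {}")
  case True
  have "0 \<le> (d - c) / h" using h cd by simp
  then show ?thesis unfolding True by simp
next
  case False
  define T where "T = {i. i \<le> N \<and> c \<le> real i * h \<and> real i * h \<le> d}"
  have fin: "finite T" and ne: "T \<noteq> {}" using False by (auto simp: T_def)
  have "Min T \<in> T" and "Max T \<in> T" using fin ne by auto
  then have "(real (Max T) - real (Min T)) * h \<le> d - c"
    by (auto simp: T_def algebra_simps)
  then have span: "real (Max T) - real (Min T) \<le> (d - c) / h"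
    using h by (simp add: field_simps)
  have "card T \<le> card {Min T..Max T}"
    using fin ne by (intro card_mono) auto
  moreover have "Min T \<le> Max T" using fin ne by simp
  ultimately have "real (card T) \<le> real (Max T) + 1 - real (Min T)"
    by (simp add: of_nat_diff)
  with span show ?thesis unfolding T_def by simp
qed

lemma card_lattice_points_ge:
  fixes h c d :: real
  assumes h: "h > 0" and c: "0 \<le> c" and d: "d \<le> real N * h"
  shows "(d - c) / h - 1 \<le> real (card {i. i \<le> N \<and> c \<le> real i * h \<and> real i * h \<le> d})"
proof (cases "d \<ge> 0")
  case False
  then have "(d - c) / h - 1 \<le> 0" using h c by (simp add: divide_nonpos_pos)
  then show ?thesis by (meson of_nat_0_le_iff order_trans)
next
  case True
  define m M where "m = nat \<lceil>c / h\<rceil>" and "M = nat \<lfloor>d / h\<rfloor>"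
  have "real m = of_int \<lceil>c / h\<rceil>" using c h by (simp add: m_def)
  then have m: "c / h \<le> real m" "real m < c / h + 1"
    using ceiling_correct[of "c / h"] by auto
  have M: "real M \<le> d / h" "d / h - 1 < real M"
    using True h by (auto simp: M_def floor_correct)
  have "{m..M} \<subseteq> {i. i \<le> N \<and> c \<le> real i * h \<and> real i * h \<le> d}"
  proof safe
    fix i assume i: "i \<in> {m..M}"
    then have i_bounds: "c / h \<le> real i" "real i \<le> d / h" using m M by auto
    moreover have "d / h \<le> real N" using d h by (simp add: field_simps)
    ultimately have "real i \<le> real N" by linarith
    then show "i \<le> N" by simp
    show "c \<le> real i * h" "real i * h \<le> d"
      using i_bounds h by (auto simp: field_simps)
  qed
  then have "card {m..M} \<le> card {i. i \<le> N \<and> c \<le> real i * h \<and> real i * h \<le> d}"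
    by (intro card_mono) auto
  moreover have "(d - c) / h - 1 \<le> real (card {m..M})"
    using m M by (simp add: of_nat_diff_real diff_divide_distrib)
  ultimately show ?thesis by linarith
qed

lemma fixed_point_position_deviation:
  assumes L: "L > 0" and fp: "fixed_point L F N x" and F: "F > 0" and N: "N \<ge> 1"
    and small: "F \<le> real N / (2 * L\<^sup>2)" and i: "i \<le> N"
  shows "\<bar>x i + real i * (L / real N)\<bar> \<le> 2 * L ^ 3 * F / real N"
proof -
  have "\<bar>x i + real i * (L / real N)\<bar> \<le> real i * (2 * L ^ 3 * F / (real N)\<^sup>2)"
    using fp fixed_point_gap_deviation[OF L fp F N small] i
    by (intro position_deviation_le) (auto simp: fixed_point_def)
  also have "\<dots> \<le> real N * (2 * L ^ 3 * F / (real N)\<^sup>2)"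
    using i L F by (intro mult_right_mono) auto
  also have "\<dots> = 2 * L ^ 3 * F / real N" by (simp add: power2_eq_square)
  finally show ?thesis .
qed

lemma fraction_in_interval_bounds:
  fixes y :: "nat \<Rightarrow> real"
  assumes L: "L > 0" and N: "N \<ge> 1" and e: "e \<ge> 0"
    and y: "\<And>i. i \<le> N \<Longrightarrow> \<bar>y i + real i * (L / real N)\<bar> \<le> e"
    and ab: "-L \<le> a" "a \<le> b" "b \<le> 0"
  shows "real (card {i\<in>{0..N}. y i \<in> {a..b}}) / real N \<le> (b - a + 2 * e) / L + 1 / real N"
    and "(b - a - 2 * e) / L - 1 / real N \<le> real (card {i\<in>{0..N}. y i \<in> {a..b}}) / real N"
proof -
  define h where "h = L / real N"
  have h: "h > 0" and Nh: "real N * h = L" using L N by (auto simp: h_def)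
  have scale: "((b - a + s) / h + t) / real N = (b - a + s) / L + t / real N" for s t
    using N L by (simp add: h_def field_simps)
  have yh: "\<And>i. i \<le> N \<Longrightarrow> \<bar>y i + real i * h\<bar> \<le> e" using y by (simp add: h_def)
  define S where "S = {i\<in>{0..N}. y i \<in> {a..b}}"
  have "S \<subseteq> {i. i \<le> N \<and> -b - e \<le> real i * h \<and> real i * h \<le> -a + e}"
  proof
    fix i assume "i \<in> S"
    with yh[of i] show "i \<in> {i. i \<le> N \<and> -b - e \<le> real i * h \<and> real i * h \<le> -a + e}"
      by (auto simp: S_def)
  qed
  then have "card S \<le> card {i. i \<le> N \<and> -b - e \<le> real i * h \<and> real i * h \<le> -a + e}"
    by (intro card_mono) auto
  then have "real (card S) \<le> (-a + e - (-b - e)) / h + 1"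
    using card_lattice_points_le[OF h, of "-b - e" "-a + e" N] ab e by linarith
  then have "real (card S) \<le> (b - a + 2 * e) / h + 1" by (simp add: add_ac)
  from divide_right_mono[OF this, of "real N"]
  show "real (card S) / real N \<le> (b - a + 2 * e) / L + 1 / real N"
    unfolding S_def using scale[of "2 * e" 1] by simp
  have "{i. i \<le> N \<and> -b + e \<le> real i * h \<and> real i * h \<le> -a - e} \<subseteq> S"
  proof
    fix i assume "i \<in> {i. i \<le> N \<and> -b + e \<le> real i * h \<and> real i * h \<le> -a - e}"
    with yh[of i] show "i \<in> S" by (auto simp: S_def)
  qed
  then have "card {i. i \<le> N \<and> -b + e \<le> real i * h \<and> real i * h \<le> -a - e} \<le> card S"
    by (intro card_mono) (auto simp: S_def)
  then have "(-a - e - (-b + e)) / h - 1 \<le> real (card S)"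
    using card_lattice_points_ge[OF h, of "-b + e" "-a - e" N] ab e Nh by linarith
  then have "(b - a - 2 * e) / h - 1 \<le> real (card S)" by (simp add: add_ac)
  from divide_right_mono[OF this, of "real N"]
  show "(b - a - 2 * e) / L - 1 / real N \<le> real (card S) / real N"
    unfolding S_def using scale[of "- 2 * e" "-1"] by simp
qed

lemma eventually_small_force:
  assumes "F \<in> o(\<lambda>N. real N)" and "L > 0"
  shows "eventually (\<lambda>N. F N \<le> real N / (2 * L\<^sup>2) \<and> N \<ge> 1) at_top"
proof -
  have "eventually (\<lambda>N. norm (F N) \<le> 1 / (2 * L\<^sup>2) * norm (real N)) at_top"
    using assms by (intro landau_o.smallD) auto
  moreover have "eventually (\<lambda>N::nat. N \<ge> 1) at_top" by simp
  ultimately show ?thesis by eventually_elim auto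
qed

definition max_gap_deviation :: "real \<Rightarrow> nat \<Rightarrow> (nat \<Rightarrow> real) \<Rightarrow> real" where
  "max_gap_deviation L N x = Max ((\<lambda>k. \<bar>gap x k - L / real N\<bar>) ` {1..N})"

lemma fixed_point_max_gap_deviation_bounds:
  assumes L: "L > 0" and fp: "fixed_point L F N x" and F: "F > 0" and N: "N \<ge> 1"
    and small: "F \<le> real N / (2 * L\<^sup>2)"
  shows "0 \<le> max_gap_deviation L N x" and "max_gap_deviation L N x \<le> 2 * L ^ 3 * F / (real N)\<^sup>2"
proof -
  have "\<bar>gap x 1 - L / real N\<bar> \<in> (\<lambda>k. \<bar>gap x k - L / real N\<bar>) ` {1..N}" using N by auto
  then show "0 \<le> max_gap_deviation L N x"
    unfolding max_gap_deviation_def by (meson Max_ge abs_ge_zero finite_imageI finite_atLeastAtMost order_trans)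
  show "max_gap_deviation L N x \<le> 2 * L ^ 3 * F / (real N)\<^sup>2"
    unfolding max_gap_deviation_def using fixed_point_gap_deviation[OF assms] N
    by (intro Max.boundedI) auto
qed

lemma fixed_point_max_gap_deviation_smallo:
  assumes L: "L > 0" and F_pos: "\<And>N. F N > 0" and F_small: "F \<in> o(\<lambda>N. real N)"
    and fp: "\<And>N. N \<ge> 1 \<Longrightarrow> fixed_point L (F N) N (x N)"
  shows "(\<lambda>N. max_gap_deviation L N (x N)) \<in> o(\<lambda>N. 1 / real N)"
proof (rule landau_o.big_small_trans)
  from eventually_small_force[OF F_small L]
  have "eventually (\<lambda>N. norm (max_gap_deviation L N (x N))
      \<le> 1 * norm (2 * L ^ 3 * F N / (real N)\<^sup>2)) at_top"
  proof eventually_elim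
    case (elim N)
    then show ?case
      using fixed_point_max_gap_deviation_bounds[OF L fp F_pos, of N] L F_pos[of N] by simp
  qed
  then show "(\<lambda>N. max_gap_deviation L N (x N)) \<in> O(\<lambda>N. 2 * L ^ 3 * F N / (real N)\<^sup>2)"
    by (rule bigoI)
  have "(\<lambda>N. 2 * L ^ 3 * (F N / real N)) \<longlonglongrightarrow> 0"
    by (intro tendsto_mult_right_zero smalloD_tendsto[OF F_small])
  moreover have "eventually (\<lambda>N. 2 * L ^ 3 * (F N / real N)
      = (2 * L ^ 3 * F N / (real N)\<^sup>2) / (1 / real N)) at_top"
    using eventually_gt_at_top[of 0] by eventually_elim (simp add: power2_eq_square)
  ultimately have "(\<lambda>N. (2 * L ^ 3 * F N / (real N)\<^sup>2) / (1 / real N)) \<longlonglongrightarrow> 0"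
    by (rule Lim_transform_eventually)
  then show "(\<lambda>N. 2 * L ^ 3 * F N / (real N)\<^sup>2) \<in> o(\<lambda>N. 1 / real N)"
    by (rule smalloI_tendsto) (use eventually_gt_at_top[of 0] in \<open>eventually_elim, simp\<close>)
qed

lemma fixed_point_density:
  assumes L: "L > 0" and F_pos: "\<And>N. F N > 0" and F_small: "F \<in> o(\<lambda>N. real N)"
    and fp: "\<And>N. N \<ge> 1 \<Longrightarrow> fixed_point L (F N) N (x N)"
    and ab: "-L \<le> a" "a \<le> b" "b \<le> 0"
  shows "(\<lambda>N. real (card {i\<in>{0..N}. x N i \<in> {a..b}}) / real N) \<longlonglongrightarrow> (b - a) / L"
proof (rule tendsto_sandwich)
  define e where "e N = 2 * L ^ 3 * (F N / real N)" for N
  have e: "e \<longlonglongrightarrow> 0"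
    unfolding e_def by (intro tendsto_mult_right_zero smalloD_tendsto[OF F_small])
  from eventually_small_force[OF F_small L] have "eventually (\<lambda>N. (b - a - 2 * e N) / L - 1 / real N
      \<le> real (card {i\<in>{0..N}. x N i \<in> {a..b}}) / real N \<and>
      real (card {i\<in>{0..N}. x N i \<in> {a..b}}) / real N \<le> (b - a + 2 * e N) / L + 1 / real N) at_top"
  proof eventually_elim
    case (elim N)
    then have "\<And>i. i \<le> N \<Longrightarrow> \<bar>x N i + real i * (L / real N)\<bar> \<le> e N"
      using fixed_point_position_deviation[OF L fp F_pos] by (simp add: e_def)
    moreover have "e N \<ge> 0" using L F_pos[of N] by (simp add: e_def)
    ultimately show ?case using fraction_in_interval_bounds[OF L _ _ _ ab] elim by blast
  qed
  then show "eventually (\<lambda>N. (b - a - 2 * e N) / L - 1 / real N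
      \<le> real (card {i\<in>{0..N}. x N i \<in> {a..b}}) / real N) at_top"
    and "eventually (\<lambda>N. real (card {i\<in>{0..N}. x N i \<in> {a..b}}) / real N
      \<le> (b - a + 2 * e N) / L + 1 / real N) at_top"
    by (auto elim: eventually_mono)
  have "(\<lambda>N. (b - a - 2 * e N) / L - 1 / real N) \<longlonglongrightarrow> (b - a - 2 * 0) / L - 0"
    and "(\<lambda>N. (b - a + 2 * e N) / L + 1 / real N) \<longlonglongrightarrow> (b - a + 2 * 0) / L + 0"
    using L by (intro tendsto_intros e lim_1_over_n; simp)+
  then show "(\<lambda>N. (b - a - 2 * e N) / L - 1 / real N) \<longlonglongrightarrow> (b - a) / L"
    and "(\<lambda>N. (b - a + 2 * e N) / L + 1 / real N) \<longlonglongrightarrow> (b - a) / L"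
    by simp_all
qed

theorem theorem2:
  fixes L :: real and F :: "nat \<Rightarrow> real" and x :: "nat \<Rightarrow> nat \<Rightarrow> real"
  assumes L_pos: "L > 0"
    and F_pos: "\<And>N. F N > 0"
    and F_small: "F \<in> o(\<lambda>N. real N)"
    and fp: "\<And>N. N \<ge> 1 \<Longrightarrow> fixed_point L (F N) N (x N)"
  shows "(\<lambda>N. Max ((\<lambda>k. \<bar>(x N (k - 1) - x N k) - L / real N\<bar>) ` {1..N}))
           \<in> o(\<lambda>N. 1 / real N) \<and>
         (\<forall>a b. -L \<le> a \<longrightarrow> a \<le> b \<longrightarrow> b \<le> 0 \<longrightarrow>
           (\<lambda>N. real (card {i\<in>{0..N}. x N i \<in> {a..b}}) / real N)
             \<longlonglongrightarrow> integral {a..b} (\<lambda>t. 1 / L))"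
proof (intro conjI allI impI)
  show "(\<lambda>N. Max ((\<lambda>k. \<bar>(x N (k - 1) - x N k) - L / real N\<bar>) ` {1..N}))
      \<in> o(\<lambda>N. 1 / real N)"
    using fixed_point_max_gap_deviation_smallo[OF L_pos F_pos F_small fp]
    by (simp add: max_gap_deviation_def gap_def)
  fix a b assume ab: "-L \<le> a" "a \<le> b" "b \<le> 0"
  then show "(\<lambda>N. real (card {i\<in>{0..N}. x N i \<in> {a..b}}) / real N)
      \<longlonglongrightarrow> integral {a..b} (\<lambda>t. 1 / L)"
    using fixed_point_density[OF L_pos F_pos F_small fp ab] by simp
qed

end
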